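(* (1) If $G$ is a finite $2$-group with a cyclic subgroup of index $4$, then $G''\leq Z(G)$. (2) If $G$ is a finite group of order $2^{\alpha}3^{\beta}$ (with $\alpha,\beta\ge 0$) having a cyclic subgroup of index less than $6$, then $G''\leq Z(G)$.
   Context: $G''=[G',G']$ is the second derived subgroup and $Z(G)$ is the center of $G$. *)

theory Defs
  imports "HOL-Algebra.Algebra"
begin

definition center :: "('a, 'b) monoid_scheme \<Rightarrow> 'a set" where
  "center G = {z \<in> carrier G. \<forall>x \<in> carrier G. z \<otimes>\<^bsub>G\<^esub> x = x \<otimes>\<^bsub>G\<^esub> z}"

definition second_derived :: "('a, 'b) monoid_scheme \<Rightarrow> 'a set" where
  "second_derived G = derived G (derived G (carrier G))"

end

theory Submission
  imports Defs
begin

text \<open>It suffices that \<open>G\<close> has an abelian subgroup \<open>A\<close> of index \<open>k \<le> 4\<close>: a cyclic subgroup is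
  abelian, and in a group of order \<open>2\<^sup>\<alpha>3\<^sup>\<beta>\<close> no subgroup has index 5. The action of \<open>G\<close> on the
  right cosets of \<open>A\<close> gives \<open>\<psi> : G \<rightarrow> S\<^sub>k\<close>. If \<open>g\<close> and \<open>h\<close> fix the same coset \<open>A r\<close>, then
  \<open>r g\<inverse> r\<inverse>\<close> and \<open>r h\<inverse> r\<inverse>\<close> lie in \<open>A\<close>, so \<open>g\<close> and \<open>h\<close> commute; in particular \<open>ker \<psi>\<close>
  centralizes every element whose image has a fixed point. An exhaustive inspection of \<open>S\<^sub>k\<close>,
  \<open>k \<le> 4\<close>, shows that a subgroup \<open>P\<close> of \<open>S\<^sub>k\<close> in which elements with a common fixed point commute
  satisfies one of two alternatives. Either every element of \<open>P\<close> is a product of two elements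
  with fixed points, which makes \<open>ker \<psi>\<close> central, and the commutators of \<open>P\<close> lie in an abelian
  subgroup \<open>Q\<close>; then \<open>G' \<le> \<psi>\<inverse>(Q)\<close> and \<open>G'' \<le> ker \<psi> \<le> Z(G)\<close>. Or the commutators of \<open>P\<close> lie
  in \<open>{1, z}\<close> for an involution \<open>z\<close> that is such a product; then \<open>\<psi>\<inverse>{1, z}\<close> is an abelian
  subgroup containing \<open>G'\<close>, and \<open>G'' = 1\<close>.\<close>

section \<open>Permutations of at most four points\<close>

text \<open>A permutation of \<open>{0..<k}\<close> is encoded as the list of its values, so that \<open>pcomp p q\<close>
  is the composite \<open>p \<circ> q\<close>.\<close>

definition perm_lists :: "nat \<Rightarrow> nat list list" where
  "perm_lists k = filter distinct (List.n_lists k [0..<k])"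

definition pcomp :: "nat list \<Rightarrow> nat list \<Rightarrow> nat list" where
  "pcomp p q = map (nth p) q"

definition pid :: "nat \<Rightarrow> nat list" where
  "pid k = [0..<k]"

definition pinv :: "nat list \<Rightarrow> nat list" where
  "pinv p = map (\<lambda>i. case find (\<lambda>j. p ! j = i) [0..<length p] of Some j \<Rightarrow> j | None \<Rightarrow> 0)
     [0..<length p]"

definition pcommutator :: "nat list \<Rightarrow> nat list \<Rightarrow> nat list" where
  "pcommutator p q = pcomp (pcomp (pcomp p q) (pinv p)) (pinv q)"

definition has_fixpoint :: "nat list \<Rightarrow> bool" where
  "has_fixpoint p \<longleftrightarrow> (\<exists>i\<in>set [0..<length p]. p ! i = i)"

definition num_moved :: "nat list \<Rightarrow> nat" where
  "num_moved p = length (filter (\<lambda>i. p ! i \<noteq> i) [0..<length p])"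

definition common_fixpoint_noncommuting :: "nat list \<Rightarrow> nat list \<Rightarrow> bool" where
  "common_fixpoint_noncommuting p q \<longleftrightarrow>
     (\<exists>i\<in>set [0..<length p]. p ! i = i \<and> q ! i = i) \<and> pcomp p q \<noteq> pcomp q p"

definition klein_four :: "nat list list" where
  "klein_four = [[0,1,2,3], [1,0,3,2], [2,3,0,1], [3,2,1,0]]"

definition cyclic_three :: "nat list list" where
  "cyclic_three = [[0,1,2], [1,2,0], [2,0,1]]"

definition abelian_perm_group :: "nat \<Rightarrow> nat list list \<Rightarrow> bool" where
  "abelian_perm_group k Q \<longleftrightarrow> pid k \<in> set Q \<and> (\<forall>a\<in>set Q. pinv a \<in> set Q) \<and>
     (\<forall>a\<in>set Q. \<forall>b\<in>set Q. pcomp a b \<in> set Q \<and> pcommutator a b = pid k)"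

text \<open>Words in two letters serve as witnesses in the exhaustive checks: evaluated at elements of a
  permutation group they stay in that group.\<close>

datatype word = Letter1 | Letter2 | Mul word word | Inv word

fun eval_word :: "word \<Rightarrow> nat list \<Rightarrow> nat list \<Rightarrow> nat list" where
  "eval_word Letter1 p q = p"
| "eval_word Letter2 p q = q"
| "eval_word (Mul u v) p q = pcomp (eval_word u p q) (eval_word v p q)"
| "eval_word (Inv u) p q = pinv (eval_word u p q)"

definition klein_four_witnesses :: "(word \<times> word) list" where
  "klein_four_witnesses =
     [(Mul Letter1 Letter2, Mul (Mul Letter1 Letter1) (Inv Letter2)),
      (Letter1, Mul (Mul Letter2 Letter1) (Inv Letter2)),
      (Letter2, Mul (Mul Letter1 Letter2) (Inv Letter1)),
      (Mul Letter1 (Inv Letter2), Mul (Inv Letter1) Letter2)]"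

definition fixpoint_factor_witnesses :: "(word \<times> word) list" where
  "fixpoint_factor_witnesses = [(Letter1, Mul (Inv Letter1) Letter2), (Inv Letter1, Mul Letter1 Letter2)]"

definition transposition_witnesses :: "word list" where
  "transposition_witnesses = [Letter1, Letter2, Mul Letter1 Letter2, Mul (Mul Letter1 Letter1) (Inv Letter2)]"

lemma small_perm_pinv_unique:
  "\<forall>k\<in>{1,2,3,4::nat}. \<forall>p\<in>set (perm_lists k). \<forall>q\<in>set (perm_lists k).
     pcomp p q = pid k \<longrightarrow> q = pinv p"
  by code_simp

lemma small_perm_pcomp_pinv: "\<forall>k\<in>{1,2,3,4::nat}. \<forall>p\<in>set (perm_lists k). pcomp p (pinv p) = pid k"
  by code_simp

lemma S1_S2_commutators_trivial:
  "\<forall>k\<in>{1,2::nat}. \<forall>p\<in>set (perm_lists k). \<forall>q\<in>set (perm_lists k). pcommutator p q = pid k"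
  by code_simp

lemma S3_commutators_in_cyclic_three:
  "\<forall>p\<in>set (perm_lists 3). \<forall>q\<in>set (perm_lists 3). pcommutator p q \<in> set cyclic_three"
  by code_simp

lemma cyclic_three_abelian: "abelian_perm_group 3 cyclic_three"
  by code_simp

lemma S3_commutator_trivial_unless_transposition:
  "\<forall>p\<in>set (perm_lists 3). \<forall>q\<in>set (perm_lists 3).
     pcommutator p q = pid 3 \<or> num_moved p = 2 \<or> num_moved q = 2"
  by code_simp

lemma S3_fixpoint_factor:
  "\<forall>t\<in>set (perm_lists 3). \<forall>p\<in>set (perm_lists 3). num_moved t = 2 \<longrightarrow> has_fixpoint p \<or>
     (has_fixpoint t \<and> has_fixpoint (pcomp (pinv t) p) \<and> p = pcomp t (pcomp (pinv t) p))"
  by code_simp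

lemma S4_commutator_in_klein_four_or_witness:
  "\<forall>p\<in>set (perm_lists 4). \<forall>q\<in>set (perm_lists 4). pcommutator p q \<in> set klein_four \<or>
     (\<exists>(u, v)\<in>set klein_four_witnesses.
        common_fixpoint_noncommuting (eval_word u p q) (eval_word v p q))"
  by code_simp

lemma klein_four_abelian: "abelian_perm_group 4 klein_four"
  by code_simp

lemma klein_four_involutive: "\<forall>c\<in>set klein_four. pcomp c c = pid 4"
  by code_simp

lemma S4_fixpoint_factor:
  "\<forall>r\<in>set (perm_lists 4). \<forall>p\<in>set (perm_lists 4). num_moved r = 3 \<longrightarrow> has_fixpoint p \<or>
     (\<exists>(u, v)\<in>set fixpoint_factor_witnesses. has_fixpoint (eval_word u r p) \<and>
        has_fixpoint (eval_word v r p) \<and> p = pcomp (eval_word u r p) (eval_word v r p))"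
  by code_simp

lemma S4_transposition_witness:
  "\<forall>p\<in>set (perm_lists 4). \<forall>q\<in>set (perm_lists 4).
     pcommutator p q = pid 4 \<or> num_moved p = 3 \<or> num_moved q = 3 \<or>
     (\<exists>w\<in>set transposition_witnesses. num_moved (eval_word w p q) = 2 \<and>
        num_moved (pcomp (pcommutator p q) (eval_word w p q)) = 2)"
  by code_simp

lemma S4_transpositions_product_three_cycle:
  "\<forall>c\<in>set klein_four. \<forall>c'\<in>set klein_four. \<forall>t\<in>set (perm_lists 4). \<forall>t'\<in>set (perm_lists 4).
     c \<noteq> c' \<longrightarrow> c \<noteq> pid 4 \<longrightarrow> c' \<noteq> pid 4 \<longrightarrow> num_moved t = 2 \<longrightarrow> num_moved t' = 2 \<longrightarrow>
     num_moved (pcomp c t) = 2 \<longrightarrow> num_moved (pcomp c' t') = 2 \<longrightarrow> num_moved (pcomp t t') = 3"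
  by code_simp

lemma S4_transposition_involutive:
  "\<forall>c\<in>set klein_four. \<forall>t\<in>set (perm_lists 4). num_moved t = 2 \<longrightarrow> pcomp (pcomp c t) t = c"
  by code_simp

lemma S4_transposition_has_fixpoint:
  "\<forall>t\<in>set (perm_lists 4). num_moved t = 2 \<longrightarrow> has_fixpoint t"
  by code_simp

lemma pinv_eqI:
  "\<lbrakk>k \<in> {1,2,3,4}; p \<in> set (perm_lists k); q \<in> set (perm_lists k); pcomp p q = pid k\<rbrakk> \<Longrightarrow>
     q = pinv p"
  using small_perm_pinv_unique by blast

lemma pcomp_pinv: "\<lbrakk>k \<in> {1,2,3,4}; p \<in> set (perm_lists k)\<rbrakk> \<Longrightarrow> pcomp p (pinv p) = pid k"
  using small_perm_pcomp_pinv by blast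

lemma mem_perm_lists_iff: "p \<in> set (perm_lists k) \<longleftrightarrow> length p = k \<and> set p \<subseteq> {0..<k} \<and> distinct p"
  by (auto simp: perm_lists_def set_n_lists)

lemma pcomp_pid_left: "set p \<subseteq> {0..<k} \<Longrightarrow> pcomp (pid k) p = p"
  unfolding pcomp_def pid_def by (rule map_idI) auto

lemma pcomp_pid_right: "length p = k \<Longrightarrow> pcomp p (pid k) = p"
  unfolding pcomp_def pid_def by (metis map_nth)

lemma has_fixpoint_pid: "0 < k \<Longrightarrow> has_fixpoint (pid k)"
  unfolding has_fixpoint_def pid_def by force

definition fixpoint_product :: "nat list set \<Rightarrow> nat list \<Rightarrow> bool" where
  "fixpoint_product P p \<longleftrightarrow> (\<exists>a\<in>P. \<exists>b\<in>P. has_fixpoint a \<and> has_fixpoint b \<and> p = pcomp a b)"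

definition commutator_dichotomy :: "nat list set \<Rightarrow> nat \<Rightarrow> bool" where
  "commutator_dichotomy P k \<longleftrightarrow>
     (\<forall>p\<in>P. fixpoint_product P p) \<and>
       (\<exists>Q. abelian_perm_group k Q \<and> (\<forall>p\<in>P. \<forall>q\<in>P. pcommutator p q \<in> set Q))
   \<or> (\<exists>z\<in>P. fixpoint_product P z \<and> pcomp z z = pid k \<and>
       (\<forall>p\<in>P. \<forall>q\<in>P. pcommutator p q \<in> {pid k, z}))"

lemma commutator_dichotomy_abelianI:
  "\<lbrakk>\<forall>p\<in>P. fixpoint_product P p; abelian_perm_group k Q; \<forall>p\<in>P. \<forall>q\<in>P. pcommutator p q \<in> set Q\<rbrakk>
     \<Longrightarrow> commutator_dichotomy P k"
  unfolding commutator_dichotomy_def by blast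

lemma commutator_dichotomy_involutionI:
  "\<lbrakk>z \<in> P; fixpoint_product P z; pcomp z z = pid k; \<forall>p\<in>P. \<forall>q\<in>P. pcommutator p q \<in> {pid k, z}\<rbrakk>
     \<Longrightarrow> commutator_dichotomy P k"
  unfolding commutator_dichotomy_def by blast

locale fixpoint_commuting_perm_group =
  fixes k :: nat and P :: "nat list set"
  assumes small: "k \<in> {1,2,3,4}"
    and perms: "P \<subseteq> set (perm_lists k)"
    and nonempty: "P \<noteq> {}"
    and pcomp_closed: "\<lbrakk>p \<in> P; q \<in> P\<rbrakk> \<Longrightarrow> pcomp p q \<in> P"
    and pinv_closed: "p \<in> P \<Longrightarrow> pinv p \<in> P"
    and fixpoint_commute: "\<lbrakk>p \<in> P; q \<in> P; i < k; p ! i = i; q ! i = i\<rbrakk> \<Longrightarrow> pcomp p q = pcomp q p"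
begin

lemma mem_perms: "p \<in> P \<Longrightarrow> p \<in> set (perm_lists k)"
  using perms by blast

lemma length_mem: "p \<in> P \<Longrightarrow> length p = k"
  using mem_perms mem_perm_lists_iff by blast

lemma eval_word_closed: "\<lbrakk>p \<in> P; q \<in> P\<rbrakk> \<Longrightarrow> eval_word w p q \<in> P"
  by (induction w) (auto intro: pcomp_closed pinv_closed)

lemma pcommutator_closed: "\<lbrakk>p \<in> P; q \<in> P\<rbrakk> \<Longrightarrow> pcommutator p q \<in> P"
  unfolding pcommutator_def by (intro pcomp_closed pinv_closed)

lemma not_common_fixpoint_noncommuting: "\<lbrakk>p \<in> P; q \<in> P\<rbrakk> \<Longrightarrow> \<not> common_fixpoint_noncommuting p q"
  using fixpoint_commute length_mem unfolding common_fixpoint_noncommuting_def by auto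

lemma pid_mem: "pid k \<in> P"
proof -
  obtain p where "p \<in> P" using nonempty by blast
  then show ?thesis
    using pcomp_closed[OF _ pinv_closed] pcomp_pinv small mem_perms by metis
qed

lemma fixpoint_product_if_has_fixpoint:
  assumes "p \<in> P" "has_fixpoint p"
  shows "fixpoint_product P p"
proof -
  have "has_fixpoint (pid k)"
    using has_fixpoint_pid small by auto
  moreover have "p = pcomp p (pid k)"
    using pcomp_pid_right[OF length_mem[OF assms(1)]] by simp
  ultimately show ?thesis
    unfolding fixpoint_product_def using assms pid_mem by blast
qed

lemma commutator_dichotomy_if_commutators_trivial:
  assumes "\<And>p q. \<lbrakk>p \<in> P; q \<in> P\<rbrakk> \<Longrightarrow> pcommutator p q = pid k"
  shows "commutator_dichotomy P k"
proof -
  have "fixpoint_product P (pid k)"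
    using fixpoint_product_if_has_fixpoint[OF pid_mem] has_fixpoint_pid small by auto
  moreover have "pcomp (pid k) (pid k) = pid k"
    using pcomp_pid_right length_mem pid_mem by blast
  ultimately show ?thesis
    using commutator_dichotomy_involutionI pid_mem assms by simp
qed

lemma all_fixpoint_products_if_fixpoint_factor:
  assumes "\<And>p. p \<in> P \<Longrightarrow> has_fixpoint p \<or> (\<exists>a\<in>P. \<exists>b\<in>P. has_fixpoint a \<and> has_fixpoint b \<and> p = pcomp a b)"
  shows "\<forall>p\<in>P. fixpoint_product P p"
  using assms fixpoint_product_if_has_fixpoint unfolding fixpoint_product_def by blast

lemma commutator_dichotomy_S3:
  assumes "k = 3"
  shows "commutator_dichotomy P k"
proof (cases "\<exists>t\<in>P. num_moved t = 2")
  case True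
  then obtain t where t: "t \<in> P" "num_moved t = 2" by blast
  have "\<forall>p\<in>P. fixpoint_product P p"
  proof (rule all_fixpoint_products_if_fixpoint_factor)
    fix p assume "p \<in> P"
    then show "has_fixpoint p \<or> (\<exists>a\<in>P. \<exists>b\<in>P. has_fixpoint a \<and> has_fixpoint b \<and> p = pcomp a b)"
      using S3_fixpoint_factor mem_perms t assms pcomp_closed[OF pinv_closed[OF t(1)]] by blast
  qed
  moreover have "\<forall>p\<in>P. \<forall>q\<in>P. pcommutator p q \<in> set cyclic_three"
    using S3_commutators_in_cyclic_three mem_perms assms by blast
  ultimately show ?thesis
    using commutator_dichotomy_abelianI cyclic_three_abelian assms by blast
next
  case False
  then show ?thesis
    using commutator_dichotomy_if_commutators_trivial S3_commutator_trivial_unless_transposition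
      mem_perms assms by blast
qed

lemma commutator_in_klein_four:
  assumes "k = 4" "p \<in> P" "q \<in> P"
  shows "pcommutator p q \<in> set klein_four"
proof -
  have "pcommutator p q \<in> set klein_four \<or> (\<exists>(u, v)\<in>set klein_four_witnesses.
      common_fixpoint_noncommuting (eval_word u p q) (eval_word v p q))"
    using S4_commutator_in_klein_four_or_witness mem_perms assms by blast
  then show ?thesis
    using not_common_fixpoint_noncommuting eval_word_closed assms(2,3) by blast
qed

lemma commutator_dichotomy_S4_three_cycle:
  assumes "k = 4" and r: "r \<in> P" "num_moved r = 3"
  shows "commutator_dichotomy P k"
proof -
  have "\<forall>p\<in>P. fixpoint_product P p"
  proof (rule all_fixpoint_products_if_fixpoint_factor)
    fix p assume "p \<in> P"
    then have "has_fixpoint p \<or> (\<exists>(u, v)\<in>set fixpoint_factor_witnesses. has_fixpoint (eval_word u r p) \<and>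
        has_fixpoint (eval_word v r p) \<and> p = pcomp (eval_word u r p) (eval_word v r p))"
      using S4_fixpoint_factor mem_perms r assms by blast
    then show "has_fixpoint p \<or> (\<exists>a\<in>P. \<exists>b\<in>P. has_fixpoint a \<and> has_fixpoint b \<and> p = pcomp a b)"
      using eval_word_closed[OF r(1) \<open>p \<in> P\<close>] by blast
  qed
  then show ?thesis
    using commutator_dichotomy_abelianI klein_four_abelian commutator_in_klein_four assms by blast
qed

context
  assumes four: "k = 4" and no_three_cycle: "\<And>r. r \<in> P \<Longrightarrow> num_moved r \<noteq> 3"
begin

lemma transposition_witness:
  assumes "p \<in> P" "q \<in> P" "pcommutator p q \<noteq> pid 4"
  shows "\<exists>t\<in>P. num_moved t = 2 \<and> num_moved (pcomp (pcommutator p q) t) = 2"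
proof -
  have "\<exists>w\<in>set transposition_witnesses. num_moved (eval_word w p q) = 2 \<and>
      num_moved (pcomp (pcommutator p q) (eval_word w p q)) = 2"
    using S4_transposition_witness mem_perms four assms no_three_cycle by blast
  then show ?thesis
    using eval_word_closed assms by blast
qed

lemma nontrivial_commutators_equal:
  assumes pq: "p \<in> P" "q \<in> P" "pcommutator p q \<noteq> pid 4"
    and pq': "p' \<in> P" "q' \<in> P" "pcommutator p' q' \<noteq> pid 4"
  shows "pcommutator p q = pcommutator p' q'"
proof (rule ccontr)
  assume ne: "pcommutator p q \<noteq> pcommutator p' q'"
  obtain t where t: "t \<in> P" "num_moved t = 2" "num_moved (pcomp (pcommutator p q) t) = 2"
    using transposition_witness[OF pq] by blast
  obtain t' where t': "t' \<in> P" "num_moved t' = 2" "num_moved (pcomp (pcommutator p' q') t') = 2"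
    using transposition_witness[OF pq'] by blast
  have "num_moved (pcomp t t') = 3"
    by (rule S4_transpositions_product_three_cycle[rule_format, of "pcommutator p q" "pcommutator p' q'"])
      (use commutator_in_klein_four[OF four] mem_perms four pq pq' t t' ne in auto)
  then show False
    using no_three_cycle pcomp_closed t(1) t'(1) by blast
qed

lemma commutator_dichotomy_S4_no_three_cycle: "commutator_dichotomy P k"
proof (cases "\<forall>p\<in>P. \<forall>q\<in>P. pcommutator p q = pid k")
  case True
  then show ?thesis by (simp add: commutator_dichotomy_if_commutators_trivial)
next
  case False
  then obtain p q where pq: "p \<in> P" "q \<in> P" "pcommutator p q \<noteq> pid 4"
    using four by blast
  define z where "z = pcommutator p q"
  have z: "z \<in> P" "z \<in> set klein_four"
    using pcommutator_closed commutator_in_klein_four four pq z_def by auto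
  obtain t where t: "t \<in> P" "num_moved t = 2" "num_moved (pcomp z t) = 2"
    using transposition_witness[OF pq] z_def by blast
  have "fixpoint_product P z"
    unfolding fixpoint_product_def
  proof (intro bexI conjI)
    show "z = pcomp (pcomp z t) t"
      using S4_transposition_involutive z t mem_perms four by auto
    show "has_fixpoint (pcomp z t)" "has_fixpoint t"
      using S4_transposition_has_fixpoint mem_perms pcomp_closed z t four by auto
  qed (use pcomp_closed z t in auto)
  moreover have "pcomp z z = pid k"
    using klein_four_involutive z four by blast
  moreover have "pcommutator p' q' \<in> {pid k, z}" if "p' \<in> P" "q' \<in> P" for p' q'
    using nontrivial_commutators_equal[OF pq that] z_def four
    by (cases "pcommutator p' q' = pid 4") auto
  ultimately show ?thesis
    using commutator_dichotomy_involutionI z by blast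
qed

end

theorem commutator_dichotomy: "commutator_dichotomy P k"
proof -
  consider "k \<in> {1, 2}" | "k = 3" | "k = 4" using small by auto
  then show ?thesis
  proof cases
    case 1
    then show ?thesis
      using commutator_dichotomy_if_commutators_trivial S1_S2_commutators_trivial mem_perms by blast
  next
    case 2
    then show ?thesis by (rule commutator_dichotomy_S3)
  next
    case 3
    then show ?thesis
      using commutator_dichotomy_S4_three_cycle commutator_dichotomy_S4_no_three_cycle by blast
  qed
qed

end

section \<open>The action on the cosets of an abelian subgroup\<close>

lemma (in group) commute_mult:
  assumes "a \<in> carrier G" "b \<in> carrier G" "y \<in> carrier G"
    and "y \<otimes> a = a \<otimes> y" "y \<otimes> b = b \<otimes> y"
  shows "y \<otimes> (a \<otimes> b) = (a \<otimes> b) \<otimes> y"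
proof -
  have "y \<otimes> (a \<otimes> b) = (a \<otimes> y) \<otimes> b"
    using assms by (simp add: m_assoc[symmetric])
  also have "\<dots> = a \<otimes> (b \<otimes> y)"
    using assms by (simp add: m_assoc)
  finally show ?thesis
    using assms by (simp add: m_assoc)
qed

lemma (in group) subgroup_center: "subgroup (center G) G"
proof (rule subgroupI)
  fix a assume a: "a \<in> center G"
  then have ac: "a \<in> carrier G" by (simp add: center_def)
  show "inv a \<in> center G" unfolding center_def
  proof (intro CollectI conjI ballI)
    fix x assume x: "x \<in> carrier G"
    have "a \<otimes> x = x \<otimes> a"
      using a x by (simp add: center_def)
    then have "inv a \<otimes> (a \<otimes> x) \<otimes> inv a = inv a \<otimes> (x \<otimes> a) \<otimes> inv a"
      by simp
    moreover have "inv a \<otimes> (a \<otimes> x) \<otimes> inv a = x \<otimes> inv a"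
      using ac x by (simp add: m_assoc[symmetric])
    moreover have "inv a \<otimes> (x \<otimes> a) \<otimes> inv a = inv a \<otimes> x"
      using ac x by (simp add: m_assoc)
    ultimately show "inv a \<otimes> x = x \<otimes> inv a"
      by simp
  qed (use ac in simp)
next
  fix a b assume ab: "a \<in> center G" "b \<in> center G"
  then have abc: "a \<in> carrier G" "b \<in> carrier G"
    by (auto simp: center_def)
  show "a \<otimes> b \<in> center G" unfolding center_def
  proof (intro CollectI conjI ballI)
    fix x assume x: "x \<in> carrier G"
    have "x \<otimes> a = a \<otimes> x" "x \<otimes> b = b \<otimes> x"
      using ab x by (simp_all add: center_def)
    then show "a \<otimes> b \<otimes> x = x \<otimes> (a \<otimes> b)"
      using commute_mult[OF abc x] by simp
  qed (use abc in simp)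
qed (auto simp: center_def)

lemma (in group) second_derived_subset:
  assumes "subgroup L G" "subgroup N G"
    and "derived_set G (carrier G) \<subseteq> L" "derived_set G L \<subseteq> N"
  shows "second_derived G \<subseteq> N"
proof -
  have "derived G (carrier G) \<subseteq> L"
    unfolding derived_def by (rule generate_subgroup_incl[OF assms(3,1)])
  then have "derived G (derived G (carrier G)) \<subseteq> derived G L"
    by (rule mono_derived)
  also have "\<dots> \<subseteq> N"
    unfolding derived_def by (rule generate_subgroup_incl[OF assms(4,2)])
  finally show ?thesis
    unfolding second_derived_def .
qed

locale abelian_coset_action = group G for G (structure) +
  fixes A :: "'a set" and k :: nat and f :: "nat \<Rightarrow> 'a set"
  assumes subgroup_A: "subgroup A G"
    and A_commute: "\<lbrakk>a \<in> A; b \<in> A\<rbrakk> \<Longrightarrow> a \<otimes> b = b \<otimes> a"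
    and enumeration: "bij_betw f {0..<k} (rcosets A)"
    and small_index: "k \<in> {1,2,3,4}"
begin

definition coset_index :: "'a set \<Rightarrow> nat" where
  "coset_index C = the_inv_into {0..<k} f C"

text \<open>The permutation induced by \<open>g\<close>; acting by \<open>inv g\<close> on the right makes it a homomorphism.\<close>

definition coset_perm :: "'a \<Rightarrow> nat list" where
  "coset_perm g = map (\<lambda>i. coset_index (f i #> inv g)) [0..<k]"

lemma A_subset: "A \<subseteq> carrier G"
  using subgroup_A subgroup.subset by blast

lemma rcosets_closed: "\<lbrakk>C \<in> rcosets A; g \<in> carrier G\<rbrakk> \<Longrightarrow> C #> g \<in> rcosets A"
  using A_subset by (auto simp: RCOSETS_def coset_mult_assoc intro!: rcosetsI)

lemma f_mem: "i < k \<Longrightarrow> f i \<in> rcosets A"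
  using enumeration bij_betw_apply by fastforce

lemma f_subset: "i < k \<Longrightarrow> f i \<subseteq> carrier G"
  using f_mem subgroup.rcosets_carrier[OF subgroup_A] is_group by blast

lemma coset_index_less: "C \<in> rcosets A \<Longrightarrow> coset_index C < k"
  unfolding coset_index_def using enumeration the_inv_into_into[of f "{0..<k}" C "{0..<k}"]
  by (auto simp: bij_betw_def)

lemma f_coset_index: "C \<in> rcosets A \<Longrightarrow> f (coset_index C) = C"
  unfolding coset_index_def using enumeration f_the_inv_into_f_bij_betw by metis

lemma coset_index_f: "i < k \<Longrightarrow> coset_index (f i) = i"
  unfolding coset_index_def using enumeration the_inv_into_f_f by (fastforce simp: bij_betw_def)

lemma coset_perm_nth: "i < k \<Longrightarrow> coset_perm g ! i = coset_index (f i #> inv g)"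
  by (simp add: coset_perm_def)

lemma f_coset_perm_nth: "\<lbrakk>i < k; g \<in> carrier G\<rbrakk> \<Longrightarrow> f (coset_perm g ! i) = f i #> inv g"
  by (simp add: coset_perm_nth f_coset_index rcosets_closed f_mem)

lemma coset_perm_mult:
  assumes g: "g \<in> carrier G" and h: "h \<in> carrier G"
  shows "coset_perm (g \<otimes> h) = pcomp (coset_perm g) (coset_perm h)"
proof (rule nth_equalityI)
  fix i assume "i < length (coset_perm (g \<otimes> h))"
  then have i: "i < k" by (simp add: coset_perm_def)
  define j where "j = coset_perm h ! i"
  have j: "j < k"
    using coset_index_less[OF rcosets_closed[OF f_mem[OF i]]] h by (simp add: j_def coset_perm_nth[OF i])
  have "coset_perm (g \<otimes> h) ! i = coset_index ((f i #> inv h) #> inv g)"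
    using coset_perm_nth[OF i] g h f_subset[OF i] by (simp add: inv_mult_group coset_mult_assoc)
  also have "\<dots> = coset_perm g ! j"
    using coset_perm_nth[OF j] f_coset_perm_nth[OF i h] by (simp add: j_def)
  finally show "coset_perm (g \<otimes> h) ! i = pcomp (coset_perm g) (coset_perm h) ! i"
    by (simp add: pcomp_def j_def i coset_perm_def)
qed (simp add: pcomp_def coset_perm_def)

lemma coset_perm_one: "coset_perm \<one> = pid k"
  by (rule nth_equalityI) (auto simp: pid_def coset_perm_nth f_subset coset_index_f coset_perm_def)

lemma coset_perm_mem_perm_lists:
  assumes g: "g \<in> carrier G"
  shows "coset_perm g \<in> set (perm_lists k)"
proof -
  have "set (coset_perm g) \<subseteq> {0..<k}"
    using coset_index_less rcosets_closed f_mem g by (auto simp: coset_perm_def)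
  moreover have "inj_on (\<lambda>i. coset_index (f i #> inv g)) {0..<k}"
  proof (rule inj_onI)
    fix i j assume ij: "i \<in> {0..<k}" "j \<in> {0..<k}"
      and "coset_index (f i #> inv g) = coset_index (f j #> inv g)"
    then have "(f i #> inv g) #> g = (f j #> inv g) #> g"
      using f_coset_perm_nth g by (metis atLeastLessThan_iff coset_perm_nth)
    then have "f i = f j"
      using ij f_subset coset_mult_assoc g by simp
    then show "i = j"
      using enumeration ij by (auto simp: bij_betw_def inj_on_def)
  qed
  ultimately show ?thesis
    by (simp add: mem_perm_lists_iff coset_perm_def distinct_map)
qed

lemma coset_perm_inv:
  assumes "g \<in> carrier G"
  shows "coset_perm (inv g) = pinv (coset_perm g)"
proof (rule pinv_eqI[OF small_index])
  show "pcomp (coset_perm g) (coset_perm (inv g)) = pid k"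
    using coset_perm_mult[of g "inv g"] assms coset_perm_one by simp
qed (use assms coset_perm_mem_perm_lists in simp_all)

lemma coset_perm_commutator:
  "\<lbrakk>g \<in> carrier G; h \<in> carrier G\<rbrakk> \<Longrightarrow>
     coset_perm (g \<otimes> h \<otimes> inv g \<otimes> inv h) = pcommutator (coset_perm g) (coset_perm h)"
  by (simp add: coset_perm_mult coset_perm_inv pcommutator_def)

lemma conjugate_mem_if_fixes:
  assumes i: "i < k" and g: "g \<in> carrier G" and fix_i: "coset_perm g ! i = i"
    and r: "r \<in> carrier G" "f i = A #> r"
  shows "r \<otimes> inv g \<otimes> inv r \<in> A"
proof -
  have "A #> (r \<otimes> inv g) = A #> r"
    using f_coset_perm_nth[OF i g] fix_i r coset_mult_assoc A_subset g by simp
  then have "r \<otimes> inv g \<in> A #> r"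
    using rcos_self subgroup_A r g by (metis inv_closed m_closed)
  then show ?thesis
    using subgroup.rcos_module_imp[OF subgroup_A is_group r(1)] by simp
qed

lemma common_fixpoint_commute:
  assumes i: "i < k" and g: "g \<in> carrier G" and h: "h \<in> carrier G"
    and "coset_perm g ! i = i" "coset_perm h ! i = i"
  shows "g \<otimes> h = h \<otimes> g"
proof -
  obtain r where r: "r \<in> carrier G" "f i = A #> r"
    using f_mem[OF i] unfolding RCOSETS_def by blast
  have "(r \<otimes> inv g \<otimes> inv r) \<otimes> (r \<otimes> inv h \<otimes> inv r) = (r \<otimes> inv h \<otimes> inv r) \<otimes> (r \<otimes> inv g \<otimes> inv r)"
    using A_commute conjugate_mem_if_fixes assms r by blast
  moreover have "inv r \<otimes> (r \<otimes> x) = x" if "x \<in> carrier G" for x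
    using r that by (simp add: m_assoc[symmetric])
  ultimately have "r \<otimes> (inv g \<otimes> inv h) \<otimes> inv r = r \<otimes> (inv h \<otimes> inv g) \<otimes> inv r"
    using r g h by (simp add: m_assoc)
  then have "inv g \<otimes> inv h = inv h \<otimes> inv g"
    using r g h by simp
  then have "inv (inv g \<otimes> inv h) = inv (inv h \<otimes> inv g)"
    by simp
  then show ?thesis
    using g h by (simp add: inv_mult_group)
qed

lemma kernel_commute_if_has_fixpoint:
  assumes y: "y \<in> carrier G" "coset_perm y = pid k" and x: "x \<in> carrier G" "has_fixpoint (coset_perm x)"
  shows "y \<otimes> x = x \<otimes> y"
proof -
  obtain i where i: "i < k" "coset_perm x ! i = i"
    using x(2) unfolding has_fixpoint_def by (auto simp: coset_perm_def)
  moreover have "coset_perm y ! i = i"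
    using y(2) i by (simp add: pid_def)
  ultimately show ?thesis
    using common_fixpoint_commute y(1) x(1) by blast
qed


lemma fixpoint_commuting_coset_perms: "fixpoint_commuting_perm_group k (coset_perm ` carrier G)"
proof
  show "coset_perm ` carrier G \<subseteq> set (perm_lists k)"
    using coset_perm_mem_perm_lists by blast
  show "coset_perm ` carrier G \<noteq> {}"
    using one_closed by blast
  show "pcomp p q \<in> coset_perm ` carrier G" if "p \<in> coset_perm ` carrier G" "q \<in> coset_perm ` carrier G" for p q
  proof -
    from that obtain g h where "g \<in> carrier G" "h \<in> carrier G" "p = coset_perm g" "q = coset_perm h"
      by blast
    then have "pcomp p q = coset_perm (g \<otimes> h)" "g \<otimes> h \<in> carrier G"
      by (simp_all add: coset_perm_mult)
    then show ?thesis
      by blast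
  qed
  show "pinv p \<in> coset_perm ` carrier G" if "p \<in> coset_perm ` carrier G" for p
  proof -
    from that obtain g where "g \<in> carrier G" "p = coset_perm g"
      by blast
    then have "pinv p = coset_perm (inv g)" "inv g \<in> carrier G"
      by (simp_all add: coset_perm_inv)
    then show ?thesis
      by blast
  qed
next
  fix p q i assume "p \<in> coset_perm ` carrier G" "q \<in> coset_perm ` carrier G"
    and fix_i: "i < k" "p ! i = i" "q ! i = i"
  then obtain g h where gh: "g \<in> carrier G" "h \<in> carrier G" "p = coset_perm g" "q = coset_perm h"
    by blast
  then have "g \<otimes> h = h \<otimes> g"
    using common_fixpoint_commute[OF fix_i(1)] fix_i by blast
  then show "pcomp p q = pcomp q p"
    using gh by (simp add: coset_perm_mult[symmetric])
qed (rule small_index)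

lemma subgroup_coset_perm_preimage:
  assumes "pid k \<in> S" "\<And>p q. \<lbrakk>p \<in> S; q \<in> S\<rbrakk> \<Longrightarrow> pcomp p q \<in> S" "\<And>p. p \<in> S \<Longrightarrow> pinv p \<in> S"
  shows "subgroup {g \<in> carrier G. coset_perm g \<in> S} G"
proof (rule subgroupI)
  have "\<one> \<in> {g \<in> carrier G. coset_perm g \<in> S}"
    using assms(1) by (simp add: coset_perm_one)
  then show "{g \<in> carrier G. coset_perm g \<in> S} \<noteq> {}"
    by blast
  show "inv g \<in> {g \<in> carrier G. coset_perm g \<in> S}" if "g \<in> {g \<in> carrier G. coset_perm g \<in> S}" for g
    using that assms(3) by (simp add: coset_perm_inv)
  show "g \<otimes> h \<in> {g \<in> carrier G. coset_perm g \<in> S}"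
    if "g \<in> {g \<in> carrier G. coset_perm g \<in> S}" "h \<in> {g \<in> carrier G. coset_perm g \<in> S}" for g h
    using that assms(2) by (simp add: coset_perm_mult)
qed auto

lemma kernel_factor:
  assumes "x \<in> carrier G" "g \<in> carrier G" "coset_perm x = coset_perm g"
  obtains w where "w \<in> carrier G" "coset_perm w = pid k" "x = w \<otimes> g"
proof
  show "x \<otimes> inv g \<in> carrier G" "x = x \<otimes> inv g \<otimes> g"
    using assms by (simp_all add: m_assoc)
  have "coset_perm (x \<otimes> inv g) = pcomp (coset_perm g) (pinv (coset_perm g))"
    using assms by (simp add: coset_perm_mult coset_perm_inv)
  then show "coset_perm (x \<otimes> inv g) = pid k"
    using pcomp_pinv[OF small_index coset_perm_mem_perm_lists[OF assms(2)]] by simp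
qed

lemma kernel_subset_center:
  assumes all_products: "\<forall>p\<in>coset_perm ` carrier G. fixpoint_product (coset_perm ` carrier G) p"
    and y: "y \<in> carrier G" "coset_perm y = pid k"
  shows "y \<in> center G"
  unfolding center_def
proof (intro CollectI conjI ballI)
  fix x assume x: "x \<in> carrier G"
  obtain g1 g2 where g: "g1 \<in> carrier G" "g2 \<in> carrier G"
    "has_fixpoint (coset_perm g1)" "has_fixpoint (coset_perm g2)"
    "coset_perm x = coset_perm (g1 \<otimes> g2)"
    using all_products x coset_perm_mult unfolding fixpoint_product_def by force
  obtain w where w: "w \<in> carrier G" "coset_perm w = pid k" "x = w \<otimes> (g1 \<otimes> g2)"
    using kernel_factor[OF x _ g(5)] g by blast
  have "y \<otimes> w = w \<otimes> y"
    using kernel_commute_if_has_fixpoint[OF y w(1)] w(2) has_fixpoint_pid small_index by auto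
  moreover have "y \<otimes> (g1 \<otimes> g2) = (g1 \<otimes> g2) \<otimes> y"
    using commute_mult kernel_commute_if_has_fixpoint[OF y] g y by blast
  ultimately show "y \<otimes> x = x \<otimes> y"
    using commute_mult w g y by simp
qed (use y in simp)

lemma second_derived_subset_center_if_fixpoint_products:
  assumes all_products: "\<forall>p\<in>coset_perm ` carrier G. fixpoint_product (coset_perm ` carrier G) p"
    and Q: "abelian_perm_group k Q"
    and commutators: "\<forall>p\<in>coset_perm ` carrier G. \<forall>q\<in>coset_perm ` carrier G. pcommutator p q \<in> set Q"
  shows "second_derived G \<subseteq> center G"
proof (rule second_derived_subset)
  let ?L = "{g \<in> carrier G. coset_perm g \<in> set Q}"
  show "subgroup ?L G"
    by (rule subgroup_coset_perm_preimage) (use Q in \<open>auto simp: abelian_perm_group_def\<close>)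
  show "derived_set G (carrier G) \<subseteq> ?L"
    using commutators coset_perm_commutator by auto
  show "derived_set G ?L \<subseteq> center G"
  proof clarify
    fix u v assume "u \<in> carrier G" "v \<in> carrier G" "coset_perm u \<in> set Q" "coset_perm v \<in> set Q"
    then show "u \<otimes> v \<otimes> inv u \<otimes> inv v \<in> center G"
      using kernel_subset_center[OF all_products] coset_perm_commutator Q
      by (simp add: abelian_perm_group_def)
  qed
qed (rule subgroup_center)

text \<open>The preimage of \<open>{1, z}\<close> is \<open>K \<union> K t\<close>, where \<open>K\<close> is the kernel and \<open>t\<close> is a product of two
  elements with fixed points, so that \<open>K \<union> {t}\<close> consists of pairwise commuting elements.\<close>

lemma second_derived_trivial_if_commutator_involution:
  assumes z: "fixpoint_product (coset_perm ` carrier G) z" "pcomp z z = pid k"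
    and commutators: "\<forall>p\<in>coset_perm ` carrier G. \<forall>q\<in>coset_perm ` carrier G. pcommutator p q \<in> {pid k, z}"
  shows "second_derived G \<subseteq> {\<one>}"
proof (rule second_derived_subset)
  obtain g1 g2 where g: "g1 \<in> carrier G" "g2 \<in> carrier G"
    "has_fixpoint (coset_perm g1)" "has_fixpoint (coset_perm g2)" "z = coset_perm (g1 \<otimes> g2)"
    using z(1) coset_perm_mult unfolding fixpoint_product_def by force
  define t where "t = g1 \<otimes> g2"
  have t: "t \<in> carrier G" "coset_perm t = z"
    using g by (simp_all add: t_def)
  let ?K = "{w \<in> carrier G. coset_perm w = pid k}"
  let ?L = "{g \<in> carrier G. coset_perm g \<in> {pid k, z}}"
  have z_perm: "z \<in> set (perm_lists k)" and pid_perm: "pid k \<in> set (perm_lists k)"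
    using t coset_perm_mem_perm_lists coset_perm_one one_closed by metis+
  show "subgroup ?L G"
  proof (rule subgroup_coset_perm_preimage)
    have "pcomp (pid k) z = z" "pcomp z (pid k) = z" "pcomp (pid k) (pid k) = pid k"
      using z_perm pid_perm pcomp_pid_left pcomp_pid_right mem_perm_lists_iff by metis+
    then show "pcomp p q \<in> {pid k, z}" if "p \<in> {pid k, z}" "q \<in> {pid k, z}" for p q
      using that z(2) by auto
    have "pinv z = z" "pinv (pid k) = pid k"
      using pinv_eqI[OF small_index] z_perm pid_perm z(2) \<open>pcomp (pid k) (pid k) = pid k\<close> by metis+
    then show "pinv p \<in> {pid k, z}" if "p \<in> {pid k, z}" for p
      using that by auto
  qed simp
  have S_commute: "a \<otimes> b = b \<otimes> a" if "a \<in> insert t ?K" "b \<in> insert t ?K" for a b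
  proof -
    have "y \<otimes> t = t \<otimes> y" if "y \<in> ?K" for y
      using that commute_mult[OF g(1,2)] kernel_commute_if_has_fixpoint g by (simp add: t_def)
    moreover have "y \<otimes> y' = y' \<otimes> y" if "y \<in> ?K" "y' \<in> ?K" for y y'
      using that kernel_commute_if_has_fixpoint has_fixpoint_pid small_index by auto
    ultimately show ?thesis
      using that by auto
  qed
  have L_factor: "u \<in> insert t ?K \<or> (\<exists>w\<in>?K. u = w \<otimes> t)" if "u \<in> ?L" for u
    using that kernel_factor[of u t] t by (cases "coset_perm u = pid k") auto
  have S_L_commute: "a \<otimes> v = v \<otimes> a" if "a \<in> insert t ?K" "v \<in> ?L" for a v
    using L_factor[OF that(2)] S_commute[OF that(1)] that t commute_mult[of _ t a] by auto
  have L_commute: "u \<otimes> v = v \<otimes> u" if "u \<in> ?L" "v \<in> ?L" for u v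
  proof -
    from L_factor[OF that(1)] show ?thesis
    proof (elim disjE bexE)
      assume "u \<in> insert t ?K"
      then show ?thesis
        using S_L_commute that(2) by simp
    next
      fix w assume "w \<in> ?K" "u = w \<otimes> t"
      then show ?thesis
        using S_L_commute[of w v] S_L_commute[of t v] commute_mult[of w t v] t that(2) by auto
    qed
  qed
  show "derived_set G (carrier G) \<subseteq> ?L"
    using commutators by (force simp: coset_perm_commutator)
  show "derived_set G ?L \<subseteq> {\<one>}"
  proof (intro subsetI, elim UN_E singletonE)
    fix u v c assume uv: "u \<in> ?L" "v \<in> ?L" and c: "c = u \<otimes> v \<otimes> inv u \<otimes> inv v"
    then have "c = v \<otimes> u \<otimes> inv u \<otimes> inv v"
      using L_commute by simp
    then show "c \<in> {\<one>}"
      using uv by (simp add: m_assoc)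
  qed
qed (simp add: triv_subgroup)

theorem second_derived_subset_center: "second_derived G \<subseteq> center G"
proof -
  interpret perms: fixpoint_commuting_perm_group k "coset_perm ` carrier G"
    by (rule fixpoint_commuting_coset_perms)
  have "\<one> \<in> center G"
    using subgroup.one_closed[OF subgroup_center] .
  with perms.commutator_dichotomy show ?thesis
    unfolding commutator_dichotomy_def
    using second_derived_subset_center_if_fixpoint_products
      second_derived_trivial_if_commutator_involution by blast
qed

end

section \<open>Groups with a cyclic subgroup of small index\<close>

lemma second_derived_subset_center_if_abelian_subgroup_index_le_4:
  fixes G (structure)
  assumes "group G" "subgroup A G" "\<And>a b. \<lbrakk>a \<in> A; b \<in> A\<rbrakk> \<Longrightarrow> a \<otimes> b = b \<otimes> a"
    and index: "card (rcosets A) \<in> {1,2,3,4}"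
  shows "second_derived G \<subseteq> center G"
proof -
  have "finite (rcosets A)"
    using index card_ge_0_finite by force
  then obtain f where "bij_betw f {0..<card (rcosets A)} (rcosets A)"
    using ex_bij_betw_nat_finite by blast
  then interpret abelian_coset_action G A "card (rcosets A)" f
    using assms by (simp add: abelian_coset_action_def abelian_coset_action_axioms_def)
  show ?thesis
    by (rule second_derived_subset_center)
qed

lemma cyclic_subgroup_commute:
  assumes "group G" "subgroup H G" "cyclic_group (subgroup_generated G H)" "a \<in> H" "b \<in> H"
  shows "a \<otimes>\<^bsub>G\<^esub> b = b \<otimes>\<^bsub>G\<^esub> a"
proof -
  interpret comm_group "subgroup_generated G H"
    using group.cyclic_imp_abelian_group assms(1,3) group.group_subgroup_generated by blast
  show ?thesis
    using m_comm assms(4,5) subgroup.carrier_subgroup_generated_subgroup[OF assms(2)] by simp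
qed

lemma five_not_dvd_2_3_power: "\<not> (5::nat) dvd 2 ^ a * 3 ^ b"
proof -
  have "coprime (5::nat) 2" "coprime (5::nat) 3"
    by (simp_all add: coprime_iff_gcd_eq_1 gcd_non_0_nat)
  then have "coprime (5::nat) (2 ^ a * 3 ^ b)"
    by simp
  then show ?thesis
    using coprime_common_divisor_nat[of 5 "2 ^ a * 3 ^ b" 5] by auto
qed

theorem proposition2p6:
  shows "(\<forall>G :: ('a, 'b) monoid_scheme.
            group G \<and> finite (carrier G) \<and> (\<exists>n::nat. order G = 2 ^ n) \<and>
            (\<exists>H. subgroup H G \<and> cyclic_group (subgroup_generated G H) \<and>
                 card (rcosets\<^bsub>G\<^esub> H) = 4)
          \<longrightarrow> second_derived G \<subseteq> center G)
       \<and> (\<forall>G :: ('a, 'b) monoid_scheme.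
            group G \<and> finite (carrier G) \<and>
            (\<exists>\<alpha> \<beta>::nat. order G = 2 ^ \<alpha> * 3 ^ \<beta>) \<and>
            (\<exists>H. subgroup H G \<and> cyclic_group (subgroup_generated G H) \<and>
                 card (rcosets\<^bsub>G\<^esub> H) < 6)
          \<longrightarrow> second_derived G \<subseteq> center G)"
proof (intro conjI allI impI; elim conjE exE)
  fix G :: "('a, 'b) monoid_scheme" and H
  assume "group G" "subgroup H G" "cyclic_group (subgroup_generated G H)" "card (rcosets\<^bsub>G\<^esub> H) = 4"
  then show "second_derived G \<subseteq> center G"
    by (intro second_derived_subset_center_if_abelian_subgroup_index_le_4)
      (auto intro: cyclic_subgroup_commute)
next
  fix G :: "('a, 'b) monoid_scheme" and H \<alpha> \<beta>
  assume G: "group G" and order: "order G = 2 ^ \<alpha> * 3 ^ \<beta>"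
    and H: "subgroup H G" "cyclic_group (subgroup_generated G H)" "card (rcosets\<^bsub>G\<^esub> H) < 6"
  have lagrange: "card (rcosets\<^bsub>G\<^esub> H) * card H = 2 ^ \<alpha> * 3 ^ \<beta>"
    using group.lagrange[OF G H(1)] order by simp
  then have "card (rcosets\<^bsub>G\<^esub> H) \<noteq> 0"
    by (metis mult_0 mult_eq_0_iff power_not_zero zero_neq_numeral)
  moreover have "card (rcosets\<^bsub>G\<^esub> H) \<noteq> 5"
    using lagrange five_not_dvd_2_3_power by (metis dvd_triv_left)
  ultimately have "card (rcosets\<^bsub>G\<^esub> H) \<in> {1,2,3,4}"
    using H(3) by auto
  then show "second_derived G \<subseteq> center G"
    using G H
    by (intro second_derived_subset_center_if_abelian_subgroup_index_le_4)
      (auto intro: cyclic_subgroup_commute)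
qed

end
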